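(* Let $\mathcal{P}$ be the set of weak orders on a set $\mathcal{A}$, ordered by strictness $\le$. For weak orders $r,s\in\mathcal{P}$, regarded as subsets of $\mathcal{A}\times\mathcal{A}$: (1) $r\le s$ implies $r\subseteq s$; (2) the least upper bound $r\vee s$ in $(\mathcal{P},\le)$ is the transitive closure of $r\cup s$; (3) the greatest lower bound $r\wedge s$ in $(\mathcal{P},\le)$, if it exists, is $r\cap s$.
   Context: A weak order on $\mathcal{A}$ is a transitive and complete relation; it is identified with the set of pairs $(a,b)$ such that $a\preceq b$ ($a$ weakly preferred to $b$). $a\prec b$ (strict preference) means $a\preceq b$ and not $b\preceq a$. Strictness order: $r\le s$ iff every strict preference $a\prec b$ of $s$ is also a strict preference of $r$. *)

theory Defs
  imports Main
begin

text \<open>A weak order on the set A: a transitive and complete relation on A,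
  given as the set of pairs (a,b) with a weakly preferred to b.\<close>
definition weak_order :: "'a set \<Rightarrow> 'a rel \<Rightarrow> bool" where
  "weak_order A r \<longleftrightarrow> r \<subseteq> A \<times> A \<and> trans r \<and>
     (\<forall>a\<in>A. \<forall>b\<in>A. (a, b) \<in> r \<or> (b, a) \<in> r)"

definition strict_part :: "'a rel \<Rightarrow> 'a rel" where
  "strict_part r = {(a, b). (a, b) \<in> r \<and> (b, a) \<notin> r}"

text \<open>Strictness order: r \<le> s iff every strict preference of s is one of r.\<close>
definition stricter :: "'a rel \<Rightarrow> 'a rel \<Rightarrow> bool" where
  "stricter r s \<longleftrightarrow> strict_part s \<subseteq> strict_part r"

definition is_lub :: "'a set \<Rightarrow> 'a rel \<Rightarrow> 'a rel \<Rightarrow> 'a rel \<Rightarrow> bool" where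
  "is_lub A r s u \<longleftrightarrow> weak_order A u \<and> stricter r u \<and> stricter s u \<and>
     (\<forall>v. weak_order A v \<and> stricter r v \<and> stricter s v \<longrightarrow> stricter u v)"

definition is_glb :: "'a set \<Rightarrow> 'a rel \<Rightarrow> 'a rel \<Rightarrow> 'a rel \<Rightarrow> bool" where
  "is_glb A r s g \<longleftrightarrow> weak_order A g \<and> stricter g r \<and> stricter g s \<and>
     (\<forall>v. weak_order A v \<and> stricter v r \<and> stricter v s \<longrightarrow> stricter v g)"

end

(* On weak orders, being stricter is the same as being contained: a weak order
   omits a pair (a,b) exactly when it strictly prefers b to a.  The poset of weak
   orders under strictness is therefore the poset of weak orders under inclusion,
   where the join of r and s is the least transitive relation containing both,
   and a meet g, lying below r \<inter> s, forces r \<inter> s to be complete and hence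
   a weak order, so that g = r \<inter> s. *)
theory Submission
  imports Defs
begin

lemma stricter_imp_subset:
  assumes "weak_order A r" "weak_order A s" "stricter r s"
  shows "r \<subseteq> s"
proof
  fix p assume "p \<in> r"
  then obtain a b where p: "p = (a, b)" and "(a, b) \<in> r" and "a \<in> A" "b \<in> A"
    using assms(1) unfolding weak_order_def by auto
  show "p \<in> s"
  proof (rule ccontr)
    assume "p \<notin> s"
    with p \<open>a \<in> A\<close> \<open>b \<in> A\<close> assms(2) have "(b, a) \<in> strict_part s"
      unfolding weak_order_def strict_part_def by auto
    with assms(3) have "(b, a) \<in> strict_part r" unfolding stricter_def by auto
    with \<open>(a, b) \<in> r\<close> show False unfolding strict_part_def by auto
  qed
qed

lemma subset_imp_stricter:
  assumes "weak_order A r" "weak_order A s" "r \<subseteq> s"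
  shows "stricter r s"
  unfolding stricter_def strict_part_def
proof clarify
  fix a b assume ab: "(a, b) \<in> s" "(b, a) \<notin> s"
  then have "(a, b) \<in> r \<or> (b, a) \<in> r"
    using assms(1,2) unfolding weak_order_def by auto
  with ab assms(3) show "(a, b) \<in> r \<and> (b, a) \<notin> r" by auto
qed

lemma weak_order_superset:
  assumes "weak_order A r" "r \<subseteq> t" "t \<subseteq> A \<times> A" "trans t"
  shows "weak_order A t"
  using assms unfolding weak_order_def by blast

lemma weak_order_trancl_Un:
  assumes "weak_order A r" "s \<subseteq> A \<times> A"
  shows "weak_order A ((r \<union> s)\<^sup>+)"
proof (rule weak_order_superset[OF assms(1)])
  have "r \<union> s \<subseteq> A \<times> A" using assms unfolding weak_order_def by auto
  then show "(r \<union> s)\<^sup>+ \<subseteq> A \<times> A" by (rule trancl_subset_Sigma)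
qed auto

lemma is_lub_unique:
  assumes "is_lub A r s u" "is_lub A r s u'"
  shows "u = u'"
proof -
  have u: "weak_order A u" "weak_order A u'" and "stricter u u'" "stricter u' u"
    using assms unfolding is_lub_def by simp_all
  have "u \<subseteq> u'" using u \<open>stricter u u'\<close> by (rule stricter_imp_subset)
  moreover have "u' \<subseteq> u" using u(2,1) \<open>stricter u' u\<close> by (rule stricter_imp_subset)
  ultimately show ?thesis by (rule subset_antisym)
qed

lemma is_lub_trancl_Un:
  assumes "weak_order A r" "weak_order A s"
  shows "is_lub A r s ((r \<union> s)\<^sup>+)"
  unfolding is_lub_def
proof (intro conjI allI impI; (elim conjE)?)
  let ?t = "(r \<union> s)\<^sup>+"
  have "s \<subseteq> A \<times> A" using assms(2) unfolding weak_order_def by simp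
  with assms(1) show t: "weak_order A ?t" by (rule weak_order_trancl_Un)
  show "stricter r ?t" by (rule subset_imp_stricter[OF assms(1) t]) auto
  show "stricter s ?t" by (rule subset_imp_stricter[OF assms(2) t]) auto
  fix v assume v: "weak_order A v" "stricter r v" "stricter s v"
  have "r \<subseteq> v" using assms(1) v(1,2) by (rule stricter_imp_subset)
  moreover have "s \<subseteq> v" using assms(2) v(1,3) by (rule stricter_imp_subset)
  ultimately have "?t \<subseteq> v\<^sup>+" by (intro trancl_mono_subset Un_least)
  also have "v\<^sup>+ = v" using v(1) unfolding weak_order_def by simp
  finally show "stricter ?t v" by (rule subset_imp_stricter[OF t v(1)])
qed

lemma is_glb_eq_Int:
  assumes "weak_order A r" "weak_order A s" "is_glb A r s g"
  shows "g = r \<inter> s"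
proof -
  have g: "weak_order A g" and "stricter g r" "stricter g s"
    and greatest: "\<And>v. weak_order A v \<Longrightarrow> stricter v r \<Longrightarrow> stricter v s \<Longrightarrow> stricter v g"
    using assms(3) unfolding is_glb_def by simp_all
  have "g \<subseteq> r" using g assms(1) \<open>stricter g r\<close> by (rule stricter_imp_subset)
  moreover have "g \<subseteq> s" using g assms(2) \<open>stricter g s\<close> by (rule stricter_imp_subset)
  ultimately have "g \<subseteq> r \<inter> s" by blast
  have "r \<inter> s \<subseteq> A \<times> A" using assms(1) unfolding weak_order_def by blast
  moreover have "trans (r \<inter> s)"
    using assms(1,2) unfolding weak_order_def by (simp add: trans_Int)
  ultimately have rs: "weak_order A (r \<inter> s)"
    by (rule weak_order_superset[OF g \<open>g \<subseteq> r \<inter> s\<close>])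
  have "stricter (r \<inter> s) r" by (rule subset_imp_stricter[OF rs assms(1)]) simp
  moreover have "stricter (r \<inter> s) s" by (rule subset_imp_stricter[OF rs assms(2)]) simp
  ultimately have "stricter (r \<inter> s) g" using rs by (intro greatest)
  with rs g have "r \<inter> s \<subseteq> g" by (rule stricter_imp_subset)
  with \<open>g \<subseteq> r \<inter> s\<close> show ?thesis by blast
qed

theorem proposition7:
  fixes A :: "'a set" and r s :: "'a rel"
  assumes "weak_order A r" and "weak_order A s"
  shows "(stricter r s \<longrightarrow> r \<subseteq> s)
     \<and> (\<forall>u. is_lub A r s u \<longleftrightarrow> u = trancl (r \<union> s))
     \<and> (\<forall>g. is_glb A r s g \<longrightarrow> g = r \<inter> s)"
proof (intro conjI allI impI iffI)
  show "r \<subseteq> s" if "stricter r s" using assms that by (rule stricter_imp_subset)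
  show "u = trancl (r \<union> s)" if "is_lub A r s u" for u
    using that is_lub_trancl_Un[OF assms] by (rule is_lub_unique)
  show "is_lub A r s u" if "u = trancl (r \<union> s)" for u
    using that is_lub_trancl_Un[OF assms] by simp
  show "g = r \<inter> s" if "is_glb A r s g" for g using assms that by (rule is_glb_eq_Int)
qed

end
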